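(* Let $M$ be an algebraic number field of degree $m$ with ring of integers $\mathbb{Z}_M$ and integral basis $(1,\omega_2,\ldots,\omega_m)$. Let $\alpha$ be an algebraic integer over $M$ of degree $n$ over $M$, let $K=M(\alpha)$, and let $0\neq\mu\in\mathbb{Z}_M$. Let $S$ be the $m\times m$ matrix whose $j$-th row is $(1,\omega_2^{(j)},\ldots,\omega_m^{(j)})$, let $c_2$ be the row norm of $S^{-1}$ (the maximum over the rows of $S^{-1}$ of the sum of the absolute values of the entries of that row), and set \[ c_3=\frac{\sqrt[n]{\overline{|\mu|}}}{\overline{|\alpha|}},\qquad c_5=2c_2\,\overline{|\alpha|}. \] Suppose $X,Y\in\mathbb{Z}_M$ satisfy \[ N_{K/M}(X-\alpha Y)=\mu \] and $\overline{|Y|}>c_3$. Write $X=x_1+\omega_2x_2+\cdots+\omega_mx_m$ and $Y=y_1+\omega_2y_2+\cdots+\omega_my_m$ with $x_i,y_i\in\mathbb{Z}$, and put $A=\max(\max_i|x_i|,\max_i|y_i|)$. Then \[ A\le c_5\cdot\overline{|Y|}. \]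
   Context: Let $\sigma_1,\ldots,\sigma_m$ be the embeddings of $M$ into $\mathbb{C}$; for $\gamma\in M$ write $\gamma^{(j)}=\sigma_j(\gamma)$. Let $f(x)\in\mathbb{Z}_M[x]$ be the monic relative defining polynomial of $\alpha$ over $M$, and for $j=1,\ldots,m$ let $\alpha^{(j1)},\ldots,\alpha^{(jn)}$ be the roots of the polynomial obtained by applying $\sigma_j$ to the coefficients of $f$ (the relative conjugates of $\alpha$ over $M^{(j)}$). For an algebraic number $\gamma$, its size $\overline{|\gamma|}$ is the maximum of the absolute values of its conjugates; in particular $\overline{|\alpha|}=\max_{j,k}|\alpha^{(jk)}|$, $\overline{|Y|}=\max_j|Y^{(j)}|$, $\overline{|\mu|}=\max_j|\mu^{(j)}|$. *)

theory Defs
  imports "HOL-Computational_Algebra.Polynomial" Complex_Main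
begin

text \<open>All fields are modelled as subfields of the complex numbers.\<close>

definition subfield_C :: "complex set \<Rightarrow> bool" where
  "subfield_C M \<longleftrightarrow> 0 \<in> M \<and> 1 \<in> M \<and>
     (\<forall>x\<in>M. \<forall>y\<in>M. x + y \<in> M \<and> x - y \<in> M \<and> x * y \<in> M) \<and>
     (\<forall>x\<in>M. x \<noteq> 0 \<longrightarrow> inverse x \<in> M)"

definition number_field :: "complex set \<Rightarrow> nat \<Rightarrow> bool" where
  "number_field M m \<longleftrightarrow> subfield_C M \<and>
     (\<exists>b :: nat \<Rightarrow> complex. (\<forall>i\<in>{1..m}. b i \<in> M) \<and>
        (\<forall>q :: nat \<Rightarrow> rat. (\<Sum>i=1..m. of_rat (q i) * b i) = 0 \<longrightarrow> (\<forall>i\<in>{1..m}. q i = 0)) \<and>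
        (\<forall>x\<in>M. \<exists>q :: nat \<Rightarrow> rat. x = (\<Sum>i=1..m. of_rat (q i) * b i)))"

definition alg_int :: "complex \<Rightarrow> bool" where
  "alg_int x \<longleftrightarrow> (\<exists>p :: complex poly. lead_coeff p = 1 \<and> (\<forall>i. coeff p i \<in> \<int>) \<and> poly p x = 0)"

definition ring_of_integers :: "complex set \<Rightarrow> complex set" where
  "ring_of_integers M = {x \<in> M. alg_int x}"

definition integral_basis :: "complex set \<Rightarrow> nat \<Rightarrow> (nat \<Rightarrow> complex) \<Rightarrow> bool" where
  "integral_basis M m w \<longleftrightarrow> w 1 = 1 \<and> (\<forall>i\<in>{1..m}. w i \<in> ring_of_integers M) \<and>
     (\<forall>q :: nat \<Rightarrow> int. (\<Sum>i=1..m. of_int (q i) * w i) = 0 \<longrightarrow> (\<forall>i\<in>{1..m}. q i = 0)) \<and>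
     (\<forall>x\<in>ring_of_integers M. \<exists>q :: nat \<Rightarrow> int. x = (\<Sum>i=1..m. of_int (q i) * w i))"

definition field_embedding :: "complex set \<Rightarrow> (complex \<Rightarrow> complex) \<Rightarrow> bool" where
  "field_embedding M \<sigma> \<longleftrightarrow> \<sigma> 1 = 1 \<and>
     (\<forall>x\<in>M. \<forall>y\<in>M. \<sigma> (x + y) = \<sigma> x + \<sigma> y \<and> \<sigma> (x * y) = \<sigma> x * \<sigma> y)"

definition all_embeddings :: "complex set \<Rightarrow> nat \<Rightarrow> (nat \<Rightarrow> complex \<Rightarrow> complex) \<Rightarrow> bool" where
  "all_embeddings M m \<sigma> \<longleftrightarrow>
     (\<forall>j\<in>{1..m}. field_embedding M (\<sigma> j)) \<and>
     (\<forall>j\<in>{1..m}. \<forall>k\<in>{1..m}. j \<noteq> k \<longrightarrow> (\<exists>x\<in>M. \<sigma> j x \<noteq> \<sigma> k x)) \<and>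
     (\<forall>\<tau>. field_embedding M \<tau> \<longrightarrow> (\<exists>j\<in>{1..m}. \<forall>x\<in>M. \<tau> x = \<sigma> j x))"

definition irreducible_over :: "complex set \<Rightarrow> complex poly \<Rightarrow> bool" where
  "irreducible_over M f \<longleftrightarrow> degree f \<ge> 1 \<and> (\<forall>i. coeff f i \<in> M) \<and>
     (\<forall>g h. (\<forall>i. coeff g i \<in> M) \<longrightarrow> (\<forall>i. coeff h i \<in> M) \<longrightarrow> f = g * h \<longrightarrow>
        degree g = 0 \<or> degree h = 0)"

text \<open>Relative norm N_{K/M}(X - alpha Y), K = M(alpha), where f is the minimal polynomial
  of alpha over M: the product over the embeddings of K over M, i.e. over the (distinct)
  roots r of f, of X - r Y.\<close>
definition rel_norm_lin :: "complex poly \<Rightarrow> complex \<Rightarrow> complex \<Rightarrow> complex" where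
  "rel_norm_lin f X Y = (\<Prod>r\<in>{r. poly f r = 0}. X - r * Y)"

definition size_M :: "nat \<Rightarrow> (nat \<Rightarrow> complex \<Rightarrow> complex) \<Rightarrow> complex \<Rightarrow> real" where
  "size_M m \<sigma> x = Max ((\<lambda>j. cmod (\<sigma> j x)) ` {1..m})"

text \<open>Size of alpha: max absolute value of all relative conjugates alpha^(jk), i.e. the roots
  of sigma_j(f) for j = 1..m.\<close>
definition size_alpha :: "nat \<Rightarrow> (nat \<Rightarrow> complex \<Rightarrow> complex) \<Rightarrow> complex poly \<Rightarrow> real" where
  "size_alpha m \<sigma> f = Max {cmod r | r j. j \<in> {1..m} \<and> poly (map_poly (\<sigma> j) f) r = 0}"

definition mat_inv_1 :: "nat \<Rightarrow> (nat \<Rightarrow> nat \<Rightarrow> complex) \<Rightarrow> (nat \<Rightarrow> nat \<Rightarrow> complex)" where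
  "mat_inv_1 m S = (THE T. (\<forall>i\<in>{1..m}. \<forall>k\<in>{1..m}.
        (\<Sum>j=1..m. T i j * S j k) = (if i = k then 1 else 0)) \<and>
      (\<forall>i j. i \<notin> {1..m} \<or> j \<notin> {1..m} \<longrightarrow> T i j = 0))"

definition row_norm :: "nat \<Rightarrow> (nat \<Rightarrow> nat \<Rightarrow> complex) \<Rightarrow> real" where
  "row_norm m T = Max ((\<lambda>i. \<Sum>j=1..m. cmod (T i j)) ` {1..m})"

end

theory Submission
  imports Defs "Jordan_Normal_Form.Determinant" "HOL-Computational_Algebra.Fundamental_Theorem_Algebra"
begin

text \<open>Since f is irreducible over M it is separable, so N(X - \<alpha> Y) is the product of the
  X - \<alpha>' Y over the roots \<alpha>' of f, and its j-th conjugate \<mu>^(j) is the product of the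
  X^(j) - \<alpha>^(jk) Y^(j). Hence one of these n factors has absolute value at most
  |\<mu>^(j)|^(1/n) < size(\<alpha>) size(Y), and therefore |X^(j)| \<le> 2 size(\<alpha>) size(Y) for every j.
  The coordinates of an integer of M are obtained from its conjugates through S^-1 (S is
  invertible by Dedekind's independence of characters), so they are at most c_2 times its size;
  this bounds the x_i. For the y_i one also needs size(\<alpha>) \<ge> 1: the constant term of f is a
  nonzero integer of M, so its size is at least 1 (otherwise its powers, which have bounded
  denominators with respect to the integral basis, would have integer coordinates tending
  to 0), and it is a product of n conjugates of \<alpha>.\<close>

section \<open>Subfields of the complex numbers and their embeddings\<close>

lemma
  assumes "subfield_C M"
  shows subfield_C_zero: "0 \<in> M" and subfield_C_one: "1 \<in> M"
    and subfield_C_add: "x \<in> M \<Longrightarrow> y \<in> M \<Longrightarrow> x + y \<in> M"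
    and subfield_C_diff: "x \<in> M \<Longrightarrow> y \<in> M \<Longrightarrow> x - y \<in> M"
    and subfield_C_mult: "x \<in> M \<Longrightarrow> y \<in> M \<Longrightarrow> x * y \<in> M"
  using assms unfolding subfield_C_def by auto

lemma subfield_C_inverse: "subfield_C M \<Longrightarrow> x \<in> M \<Longrightarrow> inverse x \<in> M"
  unfolding subfield_C_def by (cases "x = 0") auto

lemma subfield_C_divide: "subfield_C M \<Longrightarrow> x \<in> M \<Longrightarrow> y \<in> M \<Longrightarrow> x / y \<in> M"
  by (simp add: divide_inverse subfield_C_mult subfield_C_inverse)

lemma subfield_C_power: "subfield_C M \<Longrightarrow> x \<in> M \<Longrightarrow> x ^ k \<in> M"
  by (induction k) (auto intro: subfield_C_one subfield_C_mult)

lemma subfield_C_of_nat: "subfield_C M \<Longrightarrow> of_nat k \<in> M"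
  by (induction k) (auto intro: subfield_C_zero subfield_C_one subfield_C_add)

lemma subfield_C_of_int: "subfield_C M \<Longrightarrow> of_int k \<in> M"
  by (cases k rule: int_diff_cases) (auto intro: subfield_C_diff subfield_C_of_nat)

lemma subfield_C_of_rat: "subfield_C M \<Longrightarrow> of_rat r \<in> M"
  by (cases r) (auto simp: of_rat_rat intro: subfield_C_divide subfield_C_of_int)

lemma subfield_C_sum: "subfield_C M \<Longrightarrow> (\<And>i. i \<in> A \<Longrightarrow> g i \<in> M) \<Longrightarrow> sum g A \<in> M"
  by (induction A rule: infinite_finite_induct) (auto intro: subfield_C_zero subfield_C_add)

lemma
  assumes "field_embedding M \<sigma>"
  shows field_embedding_one: "\<sigma> 1 = 1"
    and field_embedding_add: "x \<in> M \<Longrightarrow> y \<in> M \<Longrightarrow> \<sigma> (x + y) = \<sigma> x + \<sigma> y"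
    and field_embedding_mult: "x \<in> M \<Longrightarrow> y \<in> M \<Longrightarrow> \<sigma> (x * y) = \<sigma> x * \<sigma> y"
  using assms unfolding field_embedding_def by auto

context
  fixes M :: "complex set" and \<sigma> :: "complex \<Rightarrow> complex"
  assumes sf: "subfield_C M" and fe: "field_embedding M \<sigma>"
begin

lemma field_embedding_zero: "\<sigma> 0 = 0"
  using field_embedding_add[OF fe, of 0 0] subfield_C_zero[OF sf] by simp

lemma field_embedding_diff: "x \<in> M \<Longrightarrow> y \<in> M \<Longrightarrow> \<sigma> (x - y) = \<sigma> x - \<sigma> y"
  using field_embedding_add[OF fe, of "x - y" y] subfield_C_diff[OF sf, of x y] by simp

lemma field_embedding_power: "x \<in> M \<Longrightarrow> \<sigma> (x ^ k) = \<sigma> x ^ k"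
  by (induction k)
    (simp_all add: field_embedding_one[OF fe] field_embedding_mult[OF fe] subfield_C_power[OF sf])

lemma field_embedding_sum: "(\<And>i. i \<in> A \<Longrightarrow> g i \<in> M) \<Longrightarrow> \<sigma> (sum g A) = (\<Sum>i\<in>A. \<sigma> (g i))"
proof (induction A rule: infinite_finite_induct)
  case (insert x F)
  then have "g x \<in> M" "sum g F \<in> M" by (auto intro: subfield_C_sum[OF sf])
  with insert show ?case by (simp add: field_embedding_add[OF fe])
qed (simp_all add: field_embedding_zero)

lemma field_embedding_of_nat: "\<sigma> (of_nat k) = of_nat k"
  by (induction k) (simp_all add: field_embedding_zero field_embedding_one[OF fe]
      field_embedding_add[OF fe] subfield_C_of_nat[OF sf] subfield_C_one[OF sf])

lemma field_embedding_of_int: "\<sigma> (of_int k) = of_int k"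
  by (cases k rule: int_diff_cases)
    (simp add: field_embedding_diff subfield_C_of_nat[OF sf] field_embedding_of_nat)

lemma field_embedding_of_rat: "\<sigma> (of_rat r) = of_rat r"
proof (cases r)
  case (Fract a b)
  then have r: "of_rat r = (of_int a / of_int b :: complex)" by (simp add: of_rat_rat)
  then have ba: "of_int b * of_rat r = (of_int a :: complex)" using Fract by simp
  have "of_int b * \<sigma> (of_rat r) = \<sigma> (of_int b * of_rat r)"
    by (simp add: field_embedding_mult[OF fe] subfield_C_of_int[OF sf] subfield_C_of_rat[OF sf]
        field_embedding_of_int)
  also have "\<dots> = of_int a" by (simp add: ba field_embedding_of_int)
  finally have "\<sigma> (of_rat r) = of_int a / of_int b" using Fract(2) by (simp add: eq_divide_eq mult.commute)
  with r show ?thesis by simp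
qed

lemma field_embedding_nonzero: "x \<in> M \<Longrightarrow> x \<noteq> 0 \<Longrightarrow> \<sigma> x \<noteq> 0"
  using field_embedding_mult[OF fe, of x "inverse x"] subfield_C_inverse[OF sf, of x]
    field_embedding_one[OF fe] by force

lemma field_embedding_rat_combination:
  "(\<And>i. i \<in> A \<Longrightarrow> w i \<in> M) \<Longrightarrow>
    \<sigma> (\<Sum>i\<in>A. of_rat (q i) * w i) = (\<Sum>i\<in>A. of_rat (q i) * \<sigma> (w i))"
  by (simp add: field_embedding_sum field_embedding_mult[OF fe] subfield_C_mult[OF sf]
      subfield_C_of_rat[OF sf] field_embedding_of_rat)

lemma field_embedding_int_combination:
  "(\<And>i. i \<in> A \<Longrightarrow> w i \<in> M) \<Longrightarrow>
    \<sigma> (\<Sum>i\<in>A. of_int (q i) * w i) = (\<Sum>i\<in>A. of_int (q i) * \<sigma> (w i))"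
  using field_embedding_rat_combination[of A w "\<lambda>i. of_int (q i)"] by simp

lemma field_embedding_coeff_map_poly: "coeff (map_poly \<sigma> p) i = \<sigma> (coeff p i)"
  by (simp add: coeff_map_poly field_embedding_zero)

lemma
  assumes "lead_coeff p = 1"
  shows field_embedding_degree_map_poly: "degree (map_poly \<sigma> p) = degree p"
    and field_embedding_lead_coeff_map_poly: "lead_coeff (map_poly \<sigma> p) = 1"
  using assms map_poly_degree_eq[of \<sigma> p] lead_coeff_map_poly_nz[of \<sigma> p]
  by (simp_all add: field_embedding_one[OF fe] field_embedding_zero)

end

section \<open>Matrices indexed by 1..m and coordinates in an integral basis\<close>

lemma sum_atLeast1_atMost_shift: "(\<Sum>j=1..m. g j) = (\<Sum>j<m. g (Suc j))"
  using sum.atLeast1_atMost_eq[of g m] by simp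

lemma index_mult_mat_shift:
  assumes "A \<in> carrier_mat m m" "B \<in> carrier_mat m m" "i \<in> {1..m}" "k \<in> {1..m}"
  shows "(A * B) $$ (i - 1, k - 1) = (\<Sum>j=1..m. A $$ (i - 1, j - 1) * B $$ (j - 1, k - 1))"
  unfolding sum_atLeast1_atMost_shift using assms
  by (subst index_mult_mat) (auto simp: scalar_prod_def atLeast0LessThan)

lemma left_kernel_trivial_imp_inverse:
  fixes S :: "nat \<Rightarrow> nat \<Rightarrow> 'a::field"
  assumes ker: "\<And>c. \<forall>k\<in>{1..m}. (\<Sum>j=1..m. c j * S j k) = 0 \<Longrightarrow> \<forall>j\<in>{1..m}. c j = 0"
  obtains T where "\<forall>i\<in>{1..m}. \<forall>k\<in>{1..m}. (\<Sum>j=1..m. T i j * S j k) = (if i = k then 1 else 0)"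
    and "\<forall>i\<in>{1..m}. \<forall>k\<in>{1..m}. (\<Sum>j=1..m. S i j * T j k) = (if i = k then 1 else 0)"
proof -
  define A where "A = mat m m (\<lambda>(i, j). S (Suc i) (Suc j))"
  have A: "A \<in> carrier_mat m m" unfolding A_def by auto
  have "det (transpose_mat A) \<noteq> 0"
  proof
    assume "det (transpose_mat A) = 0"
    then obtain v where v: "v \<in> carrier_vec m" "v \<noteq> 0\<^sub>v m" "transpose_mat A *\<^sub>v v = 0\<^sub>v m"
      using det_0_iff_vec_prod_zero_field[of "transpose_mat A" m] A by auto
    have "(\<Sum>j=1..m. v $ (j - 1) * S j k) = 0" if k: "k \<in> {1..m}" for k
    proof -
      have "0 = (transpose_mat A *\<^sub>v v) $ (k - 1)" using v k by auto
      also have "\<dots> = (\<Sum>j=1..m. v $ (j - 1) * S j k)"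
        unfolding sum_atLeast1_atMost_shift using v k A unfolding A_def
        by (subst index_mult_mat_vec) (auto simp: scalar_prod_def atLeast0LessThan mult.commute)
      finally show ?thesis by simp
    qed
    then have "\<forall>j\<in>{1..m}. v $ (j - 1) = 0" using ker[of "\<lambda>j. v $ (j - 1)"] by blast
    then have "v = 0\<^sub>v m" using v(1) by (intro eq_vecI) (auto dest!: bspec[of _ _ "Suc _"])
    with v(2) show False by simp
  qed
  then have "det A \<noteq> 0" using det_transpose[OF A] by simp
  then obtain B where B: "B \<in> carrier_mat m m" "B * A = 1\<^sub>m m" "A * B = 1\<^sub>m m"
    using det_non_zero_imp_unit[OF A, of "()"] unfolding Units_def ring_mat_def by auto
  have A_entry: "A $$ (j - 1, k - 1) = S j k" if "j \<in> {1..m}" "k \<in> {1..m}" for j k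
    using that unfolding A_def by auto
  show thesis
  proof (rule that[of "\<lambda>i j. B $$ (i - 1, j - 1)"]; intro ballI)
    fix i k assume ik: "i \<in> {1..m}" "k \<in> {1..m}"
    have "(B * A) $$ (i - 1, k - 1) = (\<Sum>j=1..m. B $$ (i - 1, j - 1) * S j k)"
      unfolding index_mult_mat_shift[OF B(1) A ik] by (intro sum.cong refl) (metis A_entry ik(2))
    then show "(\<Sum>j=1..m. B $$ (i - 1, j - 1) * S j k) = (if i = k then 1 else 0)"
      using B(2) ik by (auto split: if_splits)
    have "(A * B) $$ (i - 1, k - 1) = (\<Sum>j=1..m. S i j * B $$ (j - 1, k - 1))"
      unfolding index_mult_mat_shift[OF A B(1) ik] by (intro sum.cong refl) (metis A_entry ik(1))
    then show "(\<Sum>j=1..m. S i j * B $$ (j - 1, k - 1)) = (if i = k then 1 else 0)"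
      using B(3) ik by (auto split: if_splits)
  qed
qed

lemma mat_inv_1_left_inverse:
  fixes S :: "nat \<Rightarrow> nat \<Rightarrow> complex"
  assumes ker: "\<And>c. \<forall>k\<in>{1..m}. (\<Sum>j=1..m. c j * S j k) = 0 \<Longrightarrow> \<forall>j\<in>{1..m}. c j = 0"
  shows "\<forall>i\<in>{1..m}. \<forall>k\<in>{1..m}. (\<Sum>j=1..m. mat_inv_1 m S i j * S j k) = (if i = k then 1 else 0)"
proof -
  obtain T where
    L: "\<forall>i\<in>{1..m}. \<forall>k\<in>{1..m}. (\<Sum>j=1..m. T i j * S j k) = (if i = k then 1 else 0)" and
    R: "\<forall>i\<in>{1..m}. \<forall>k\<in>{1..m}. (\<Sum>j=1..m. S i j * T j k) = (if i = k then 1 else 0)"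
    using left_kernel_trivial_imp_inverse[OF ker] by blast
  define P where "P U \<longleftrightarrow> (\<forall>i\<in>{1..m}. \<forall>k\<in>{1..m}.
        (\<Sum>j=1..m. U i j * S j k) = (if i = k then 1 else 0)) \<and>
      (\<forall>i j. i \<notin> {1..m} \<or> j \<notin> {1..m} \<longrightarrow> U i j = 0)" for U
  define T0 where "T0 i j = (if i \<in> {1..m} \<and> j \<in> {1..m} then T i j else 0)" for i j
  have "P T0" using L unfolding P_def T0_def by (auto intro!: sum.cong)
  moreover have "U = T0" if "P U" for U
  proof (intro ext)
    fix i k
    show "U i k = T0 i k"
    proof (cases "i \<in> {1..m} \<and> k \<in> {1..m}")
      case True
      \<comment> \<open>T = (U S) T = U (S T) = U\<close>
      have "T i k = (\<Sum>j=1..m. (if i = j then T j k else 0))" using True by simp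
      also have "\<dots> = (\<Sum>j=1..m. (\<Sum>l=1..m. U i l * S l j) * T j k)"
        using \<open>P U\<close> True unfolding P_def by (intro sum.cong) auto
      also have "\<dots> = (\<Sum>l=1..m. U i l * (\<Sum>j=1..m. S l j * T j k))"
        by (simp add: sum_distrib_left sum_distrib_right mult.assoc) (rule sum.swap)
      also have "\<dots> = (\<Sum>l=1..m. (if l = k then U i l else 0))"
        using R True by (intro sum.cong) auto
      also have "\<dots> = U i k" using True by simp
      finally show ?thesis using True unfolding T0_def by simp
    next
      case False
      then show ?thesis using \<open>P U\<close> unfolding P_def T0_def by auto
    qed
  qed
  ultimately have "P (mat_inv_1 m S)"
    unfolding mat_inv_1_def P_def[symmetric] by (rule theI)
  then show ?thesis unfolding P_def by blast
qed

lemma common_denominator: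
  fixes c :: "'b \<Rightarrow> rat"
  assumes "finite A"
  obtains D :: int and z :: "'b \<Rightarrow> int" where "D > 0" and "\<And>i. i \<in> A \<Longrightarrow> of_int D * c i = of_int (z i)"
proof -
  have "\<exists>D z. D > (0::int) \<and> (\<forall>i\<in>A. of_int D * c i = of_int (z i))"
    using assms
  proof (induction A rule: finite_induct)
    case empty
    show ?case by (intro exI[of _ 1]) auto
  next
    case (insert x F)
    then obtain D z where D: "D > 0" "\<forall>i\<in>F. of_int D * c i = of_int (z i)" by blast
    obtain a b where ab: "c x = Rat.Fract a b" "b > 0" by (cases "c x") auto
    define z' where "z' i = (if i = x then D * a else z i * b)" for i
    have "of_int (D * b) * c i = of_int (z' i)" if "i \<in> insert x F" for i
      using that D ab by (auto simp: z'_def Fract_of_int_quotient field_simps)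
    with D ab show ?case by (intro exI[of _ "D * b"] exI[of _ z']) auto
  qed
  with that show thesis by blast
qed

lemma number_field_subfield_C: "number_field M m \<Longrightarrow> subfield_C M"
  unfolding number_field_def by auto

lemma integral_basis_in_M: "integral_basis M m \<omega> \<Longrightarrow> i \<in> {1..m} \<Longrightarrow> \<omega> i \<in> M"
  unfolding integral_basis_def ring_of_integers_def by auto

lemma all_embeddings_field_embedding:
  "all_embeddings M m \<sigma> \<Longrightarrow> j \<in> {1..m} \<Longrightarrow> field_embedding M (\<sigma> j)"
  unfolding all_embeddings_def by auto

lemma integral_basis_rat_independent:
  assumes ib: "integral_basis M m \<omega>" and zero: "(\<Sum>i=1..m. of_rat (c i) * \<omega> i) = 0"
  shows "\<forall>i\<in>{1..m}. c i = 0"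
proof -
  obtain D :: int and q where D: "D > 0" and q: "\<And>i. i \<in> {1..m} \<Longrightarrow> of_int D * c i = of_int (q i)"
    using common_denominator[of "{1..m}" c] by auto
  have "(\<Sum>i=1..m. of_int (q i) * \<omega> i) = of_int D * (\<Sum>i=1..m. of_rat (c i) * \<omega> i)"
    unfolding sum_distrib_left
  proof (intro sum.cong refl)
    fix i assume i: "i \<in> {1..m}"
    have "(of_int (q i) :: complex) = of_rat (of_int D * c i)" using q[OF i] by simp
    then show "of_int (q i) * \<omega> i = of_int D * (of_rat (c i) * \<omega> i)" by (simp add: of_rat_mult)
  qed
  also have "\<dots> = 0" using zero by simp
  finally have "\<forall>i\<in>{1..m}. q i = 0" using ib unfolding integral_basis_def by blast
  with q D show ?thesis by force
qed

lemma integral_basis_rat_spans: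
  assumes nf: "number_field M m" and ib: "integral_basis M m \<omega>" and x: "x \<in> M"
  obtains r :: "nat \<Rightarrow> rat" where "x = (\<Sum>i=1..m. of_rat (r i) * \<omega> i)"
proof -
  obtain b :: "nat \<Rightarrow> complex" where
    b: "\<forall>y\<in>M. \<exists>q :: nat \<Rightarrow> rat. y = (\<Sum>i=1..m. of_rat (q i) * b i)"
    using nf unfolding number_field_def by blast
  have "\<forall>i\<in>{1..m}. \<exists>q :: nat \<Rightarrow> rat. \<omega> i = (\<Sum>k=1..m. of_rat (q k) * b k)"
    using b integral_basis_in_M[OF ib] by blast
  then obtain B where B: "\<forall>i\<in>{1..m}. \<omega> i = (\<Sum>k=1..m. of_rat (B i k) * b k)"
    by metis
  have expand: "(\<Sum>i=1..m. of_rat (c i) * \<omega> i) = (\<Sum>k=1..m. of_rat (\<Sum>i=1..m. c i * B i k) * b k)"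
    for c :: "nat \<Rightarrow> rat"
  proof -
    have "(\<Sum>i=1..m. of_rat (c i) * \<omega> i) = (\<Sum>i=1..m. of_rat (c i) * (\<Sum>k=1..m. of_rat (B i k) * b k))"
      using B by (intro sum.cong) auto
    also have "\<dots> = (\<Sum>k=1..m. of_rat (\<Sum>i=1..m. c i * B i k) * b k)"
      by (simp add: sum_distrib_left sum_distrib_right of_rat_sum of_rat_mult mult.assoc) (rule sum.swap)
    finally show ?thesis .
  qed
  \<comment> \<open>a left inverse C of the change of basis matrix B expresses each b k in terms of \<omega>\<close>
  obtain C where C: "\<forall>i\<in>{1..m}. \<forall>k\<in>{1..m}. (\<Sum>j=1..m. C i j * B j k) = (if i = k then 1 else 0)"
  proof (rule left_kernel_trivial_imp_inverse)
    fix c assume "\<forall>k\<in>{1..m}. (\<Sum>j=1..m. c j * B j k) = 0"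
    then have "(\<Sum>i=1..m. of_rat (c i) * \<omega> i) = 0" unfolding expand by simp
    then show "\<forall>j\<in>{1..m}. c j = 0" by (rule integral_basis_rat_independent[OF ib])
  qed
  have bC: "b k = (\<Sum>i=1..m. of_rat (C k i) * \<omega> i)" if k: "k \<in> {1..m}" for k
  proof -
    have "(\<Sum>i=1..m. of_rat (C k i) * \<omega> i) = (\<Sum>l=1..m. (if k = l then b l else 0))"
      unfolding expand using C k by (intro sum.cong) auto
    also have "\<dots> = b k" using k by simp
    finally show ?thesis by simp
  qed
  obtain q where "x = (\<Sum>k=1..m. of_rat (q k) * b k)" using b x by blast
  also have "\<dots> = (\<Sum>k=1..m. of_rat (q k) * (\<Sum>i=1..m. of_rat (C k i) * \<omega> i))"
    using bC by (intro sum.cong) auto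
  also have "\<dots> = (\<Sum>i=1..m. of_rat (\<Sum>k=1..m. q k * C k i) * \<omega> i)"
    by (simp add: sum_distrib_left sum_distrib_right of_rat_sum of_rat_mult mult.assoc) (rule sum.swap)
  finally show thesis by (rule that)
qed

lemma integral_basis_dim_pos:
  assumes "number_field M m" and "integral_basis M m \<omega>"
  shows "1 \<le> m"
proof (rule ccontr)
  assume "\<not> 1 \<le> m"
  moreover obtain r where "(1::complex) = (\<Sum>i=1..m. of_rat (r i) * \<omega> i)"
    by (rule integral_basis_rat_spans[OF assms subfield_C_one[OF number_field_subfield_C[OF assms(1)]]])
  ultimately show False by simp
qed

lemma embeddings_linearly_independent:
  assumes sf: "subfield_C M" and "finite J"
    and fe: "\<forall>j\<in>J. field_embedding M (\<sigma> j)"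
    and distinct: "\<forall>j\<in>J. \<forall>k\<in>J. j \<noteq> k \<longrightarrow> (\<exists>x\<in>M. \<sigma> j x \<noteq> \<sigma> k x)"
    and zero: "\<forall>x\<in>M. (\<Sum>j\<in>J. c j * \<sigma> j x) = 0"
  shows "\<forall>j\<in>J. c j = 0"
  using assms(2-5)
proof (induction J arbitrary: c rule: finite_induct)
  case (insert a J)
  have c_a: "(\<Sum>j\<in>J. c j * \<sigma> j x) = - (c a * \<sigma> a x)" if "x \<in> M" for x
    using insert.prems(3) that insert.hyps by (simp add: eq_neg_iff_add_eq_0 add.commute)
  have fe_a: "field_embedding M (\<sigma> a)" using insert.prems(1) by simp
  have c_J: "\<forall>b\<in>J. c b = 0"
  proof
    fix b assume b: "b \<in> J"
    with insert have "a \<noteq> b" by auto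
    with b insert.prems(2) obtain y where y: "y \<in> M" "\<sigma> a y \<noteq> \<sigma> b y" by blast
    \<comment> \<open>comparing the relation at y x with \<sigma> a y times the relation at x eliminates \<sigma> a\<close>
    define d where "d j = c j * (\<sigma> j y - \<sigma> a y)" for j
    have "(\<Sum>j\<in>J. d j * \<sigma> j x) = 0" if x: "x \<in> M" for x
    proof -
      have "(\<Sum>j\<in>J. d j * \<sigma> j x) = (\<Sum>j\<in>J. c j * \<sigma> j (y * x)) - \<sigma> a y * (\<Sum>j\<in>J. c j * \<sigma> j x)"
        unfolding d_def sum_distrib_left sum_subtractf[symmetric]
        using insert.prems(1) field_embedding_mult[of M _ y x] y(1) x
        by (intro sum.cong) (auto simp: algebra_simps)
      also have "\<dots> = 0"
        using c_a[OF subfield_C_mult[OF sf y(1) x]] c_a[OF x] field_embedding_mult[OF fe_a y(1) x]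
        by simp
      finally show ?thesis .
    qed
    then have "d b = 0" using insert.IH insert.prems(1,2) b by blast
    then show "c b = 0" using y(2) unfolding d_def by simp
  qed
  then have "c a * \<sigma> a 1 = 0" using c_a[OF subfield_C_one[OF sf]] by simp
  then show ?case using c_J field_embedding_one[OF fe_a] by simp
qed simp

lemma embedding_matrix_left_kernel:
  assumes nf: "number_field M m" and ib: "integral_basis M m \<omega>"
    and fe: "\<forall>j\<in>{1..m}. field_embedding M (\<sigma> j)"
    and distinct: "\<forall>j\<in>{1..m}. \<forall>k\<in>{1..m}. j \<noteq> k \<longrightarrow> (\<exists>x\<in>M. \<sigma> j x \<noteq> \<sigma> k x)"
    and zero: "\<forall>k\<in>{1..m}. (\<Sum>j=1..m. c j * \<sigma> j (\<omega> k)) = 0"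
  shows "\<forall>j\<in>{1..m}. c j = 0"
proof (rule embeddings_linearly_independent[OF number_field_subfield_C[OF nf] _ fe distinct])
  have sf: "subfield_C M" using nf by (rule number_field_subfield_C)
  show "\<forall>x\<in>M. (\<Sum>j=1..m. c j * \<sigma> j x) = 0"
  proof
    fix x assume "x \<in> M"
    then obtain r where r: "x = (\<Sum>i=1..m. of_rat (r i) * \<omega> i)"
      by (rule integral_basis_rat_spans[OF nf ib])
    have "\<sigma> j x = (\<Sum>i=1..m. of_rat (r i) * \<sigma> j (\<omega> i))" if "j \<in> {1..m}" for j
      unfolding r using fe that integral_basis_in_M[OF ib]
      by (intro field_embedding_rat_combination[OF sf]) auto
    then have "(\<Sum>j=1..m. c j * \<sigma> j x) = (\<Sum>j=1..m. c j * (\<Sum>i=1..m. of_rat (r i) * \<sigma> j (\<omega> i)))"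
      by (intro sum.cong) auto
    also have "\<dots> = (\<Sum>i=1..m. of_rat (r i) * (\<Sum>j=1..m. c j * \<sigma> j (\<omega> i)))"
      by (simp add: sum_distrib_left mult.left_commute) (rule sum.swap)
    also have "\<dots> = 0" using zero by simp
    finally show "(\<Sum>j=1..m. c j * \<sigma> j x) = 0" .
  qed
qed simp

lemma integral_coordinate_eq:
  assumes nf: "number_field M m" and emb: "all_embeddings M m \<sigma>" and ib: "integral_basis M m \<omega>"
    and z: "z = (\<Sum>i=1..m. of_int (a i) * \<omega> i)" and k: "k \<in> {1..m}"
  shows "of_int (a k) = (\<Sum>j=1..m. mat_inv_1 m (\<lambda>j i. \<sigma> j (\<omega> i)) k j * \<sigma> j z)"
proof -
  have sf: "subfield_C M" using nf by (rule number_field_subfield_C)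
  let ?T = "mat_inv_1 m (\<lambda>j i. \<sigma> j (\<omega> i))"
  have fe: "\<forall>j\<in>{1..m}. field_embedding M (\<sigma> j)"
    using emb by (auto intro: all_embeddings_field_embedding)
  have T: "\<forall>i\<in>{1..m}. \<forall>k\<in>{1..m}. (\<Sum>j=1..m. ?T i j * \<sigma> j (\<omega> k)) = (if i = k then 1 else 0)"
    by (rule mat_inv_1_left_inverse, rule embedding_matrix_left_kernel[OF nf ib fe])
      (use emb in \<open>auto simp: all_embeddings_def\<close>)
  have "\<sigma> j z = (\<Sum>i=1..m. of_int (a i) * \<sigma> j (\<omega> i))" if "j \<in> {1..m}" for j
    unfolding z using fe that integral_basis_in_M[OF ib]
    by (intro field_embedding_int_combination[OF sf]) auto
  then have "(\<Sum>j=1..m. ?T k j * \<sigma> j z) = (\<Sum>j=1..m. ?T k j * (\<Sum>i=1..m. of_int (a i) * \<sigma> j (\<omega> i)))"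
    by (intro sum.cong) auto
  also have "\<dots> = (\<Sum>i=1..m. of_int (a i) * (\<Sum>j=1..m. ?T k j * \<sigma> j (\<omega> i)))"
    by (simp add: sum_distrib_left mult.left_commute) (rule sum.swap)
  also have "\<dots> = (\<Sum>i=1..m. (if k = i then of_int (a i) else 0))"
    using T k by (intro sum.cong) auto
  also have "\<dots> = of_int (a k)" using k by simp
  finally show ?thesis by simp
qed

lemma size_M_ge: "j \<in> {1..m} \<Longrightarrow> cmod (\<sigma> j z) \<le> size_M m \<sigma> z"
  unfolding size_M_def by (intro Max_ge) auto

lemma size_M_nonneg: "1 \<le> m \<Longrightarrow> 0 \<le> size_M m \<sigma> z"
  using size_M_ge[of 1 m \<sigma> z] by (meson atLeastAtMost_iff le_refl norm_ge_zero order_trans)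

lemma size_M_le: "1 \<le> m \<Longrightarrow> (\<And>j. j \<in> {1..m} \<Longrightarrow> cmod (\<sigma> j z) \<le> B) \<Longrightarrow> size_M m \<sigma> z \<le> B"
  unfolding size_M_def by (subst Max_le_iff) auto

lemma row_norm_nonneg: "1 \<le> m \<Longrightarrow> 0 \<le> row_norm m T"
  unfolding row_norm_def
  by (rule order_trans[OF _ Max_ge[of _ "\<Sum>j=1..m. cmod (T 1 j)"]]) (auto intro: sum_nonneg)

lemma integral_coordinate_bound:
  assumes nf: "number_field M m" and emb: "all_embeddings M m \<sigma>" and ib: "integral_basis M m \<omega>"
    and z: "z = (\<Sum>i=1..m. of_int (a i) * \<omega> i)" and k: "k \<in> {1..m}"
  shows "\<bar>real_of_int (a k)\<bar> \<le> row_norm m (mat_inv_1 m (\<lambda>j i. \<sigma> j (\<omega> i))) * size_M m \<sigma> z"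
proof -
  let ?T = "mat_inv_1 m (\<lambda>j i. \<sigma> j (\<omega> i))"
  have "\<bar>real_of_int (a k)\<bar> = cmod (\<Sum>j=1..m. ?T k j * \<sigma> j z)"
    using integral_coordinate_eq[OF nf emb ib z k] by (metis norm_of_int)
  also have "\<dots> \<le> (\<Sum>j=1..m. cmod (?T k j) * cmod (\<sigma> j z))"
    by (rule order_trans[OF norm_sum]) (simp add: norm_mult)
  also have "\<dots> \<le> (\<Sum>j=1..m. cmod (?T k j)) * size_M m \<sigma> z"
    unfolding sum_distrib_right by (intro sum_mono mult_left_mono size_M_ge) auto
  also have "\<dots> \<le> row_norm m ?T * size_M m \<sigma> z"
    unfolding row_norm_def using k size_M_nonneg[of m \<sigma> z]
    by (intro mult_right_mono Max_ge) auto
  finally show ?thesis .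
qed

section \<open>Polynomials over a subfield and their conjugates\<close>

lemma poly_division_over_subfield:
  assumes sf: "subfield_C M" and p: "\<forall>i. coeff p i \<in> M" and h: "\<forall>i. coeff h i \<in> M" and "h \<noteq> 0"
  obtains q r where "\<forall>i. coeff q i \<in> M" "\<forall>i. coeff r i \<in> M" "p = q * h + r" "r = 0 \<or> degree r < degree h"
proof -
  have "\<exists>q r. (\<forall>i. coeff q i \<in> M) \<and> (\<forall>i. coeff r i \<in> M) \<and> p = q * h + r \<and> (r = 0 \<or> degree r < degree h)"
    using p
  proof (induction "degree p" arbitrary: p rule: less_induct)
    case less
    show ?case
    proof (cases "p = 0 \<or> degree p < degree h")
      case True
      then show ?thesis using less.prems subfield_C_zero[OF sf] by (intro exI[of _ 0] exI[of _ p]) auto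
    next
      case False
      then have dg: "degree h \<le> degree p" by auto
      define c where "c = lead_coeff p / lead_coeff h"
      define u where "u = monom c (degree p - degree h)"
      have "c \<in> M" using less.prems h subfield_C_divide[OF sf] by (simp add: c_def)
      then have u: "\<forall>i. coeff u i \<in> M" using subfield_C_zero[OF sf] by (simp add: u_def coeff_monom)
      have uh: "\<forall>i. coeff (u * h) i \<in> M"
        using \<open>c \<in> M\<close> h subfield_C_mult[OF sf] subfield_C_zero[OF sf]
        by (simp add: u_def coeff_monom_mult)
      have diff_M: "\<forall>i. coeff (p - u * h) i \<in> M" using less.prems uh subfield_C_diff[OF sf] by auto
      have "coeff (p - u * h) (degree p) = 0"
        using dg \<open>h \<noteq> 0\<close> by (simp add: u_def c_def coeff_monom_mult)
      moreover have "degree (u * h) \<le> degree p"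
        using dg degree_monom_le[of c "degree p - degree h"]
        by (intro order_trans[OF degree_mult_le]) (auto simp: u_def)
      ultimately have "p - u * h = 0 \<or> degree (p - u * h) < degree p"
        by (metis degree_diff_le le_neq_implies_less le_refl leading_coeff_0_iff)
      then show ?thesis
      proof
        assume "p - u * h = 0"
        then show ?thesis using u subfield_C_zero[OF sf] by (intro exI[of _ u] exI[of _ 0]) auto
      next
        assume "degree (p - u * h) < degree p"
        from less.hyps[OF this diff_M] obtain q r where qr: "\<forall>i. coeff q i \<in> M" "\<forall>i. coeff r i \<in> M"
          "p - u * h = q * h + r" "r = 0 \<or> degree r < degree h" by blast
        have "p = (q + u) * h + r" using qr(3) by (simp add: algebra_simps)
        moreover have "\<forall>i. coeff (q + u) i \<in> M" using qr(1) u subfield_C_add[OF sf] by simp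
        ultimately show ?thesis using qr by blast
      qed
    qed
  qed
  with that show thesis by blast
qed

lemma irreducible_overD:
  "irreducible_over M f \<Longrightarrow> \<forall>i. coeff g i \<in> M \<Longrightarrow> \<forall>i. coeff h i \<in> M \<Longrightarrow> f = g * h \<Longrightarrow>
    degree g = 0 \<or> degree h = 0"
  unfolding irreducible_over_def by simp

lemma irreducible_over_degree_le:
  assumes sf: "subfield_C M" and irr: "irreducible_over M f" and "poly f a = 0"
    and p: "p \<noteq> 0" "\<forall>i. coeff p i \<in> M" "poly p a = 0"
  shows "degree f \<le> degree p"
proof -
  have fM: "\<forall>i. coeff f i \<in> M" and "degree f \<ge> 1" using irr unfolding irreducible_over_def by auto
  define P where "P g \<longleftrightarrow> g \<noteq> 0 \<and> (\<forall>i. coeff g i \<in> M) \<and> poly g a = 0" for g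
  have "P p" using p unfolding P_def by simp
  then obtain g where g: "P g" and min: "\<And>k. P k \<Longrightarrow> degree g \<le> degree k"
    using ex_has_least_nat[of P p degree] by blast
  have gM: "\<forall>i. coeff g i \<in> M" and "g \<noteq> 0" "poly g a = 0" using g unfolding P_def by auto
  obtain q r where qr: "\<forall>i. coeff q i \<in> M" "\<forall>i. coeff r i \<in> M" "f = q * g + r"
    "r = 0 \<or> degree r < degree g"
    using poly_division_over_subfield[OF sf fM gM \<open>g \<noteq> 0\<close>] by blast
  have "poly r a = 0" using qr(3) \<open>poly f a = 0\<close> \<open>poly g a = 0\<close> by simp
  have "r = 0"
  proof (rule ccontr)
    assume "r \<noteq> 0"
    with qr(2) \<open>poly r a = 0\<close> have "P r" unfolding P_def by simp
    with min[OF this] qr(4) \<open>r \<noteq> 0\<close> show False by simp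
  qed
  have "degree g \<noteq> 0"
  proof
    assume "degree g = 0"
    then obtain c where "g = [:c:]" by (rule degree_eq_zeroE)
    with \<open>g \<noteq> 0\<close> \<open>poly g a = 0\<close> show False by simp
  qed
  have f: "f = q * g" using qr(3) \<open>r = 0\<close> by simp
  then have "degree q = 0 \<or> degree g = 0" by (rule irreducible_overD[OF irr qr(1) gM])
  with \<open>degree g \<noteq> 0\<close> have "degree q = 0" by simp
  moreover have "q \<noteq> 0" using f \<open>degree f \<ge> 1\<close> by auto
  ultimately have "degree f = degree g" using f degree_mult_eq[of q g] \<open>g \<noteq> 0\<close> by simp
  with min[OF \<open>P p\<close>] show ?thesis by simp
qed

lemma irreducible_over_rsquarefree:
  assumes sf: "subfield_C M" and irr: "irreducible_over M f"
  shows "rsquarefree f"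
  unfolding rsquarefree_roots
proof (intro allI notI)
  fix a assume a: "poly f a = 0 \<and> poly (pderiv f) a = 0"
  have fM: "\<forall>i. coeff f i \<in> M" and "degree f \<ge> 1" using irr unfolding irreducible_over_def by auto
  then have "pderiv f \<noteq> 0" by (simp add: pderiv_eq_0_iff)
  moreover have "\<forall>i. coeff (pderiv f) i \<in> M"
    unfolding coeff_pderiv using fM by (blast intro: subfield_C_mult[OF sf] subfield_C_of_nat[OF sf])
  ultimately have "degree f \<le> degree (pderiv f)"
    using irreducible_over_degree_le[OF sf irr] a by blast
  with \<open>degree f \<ge> 1\<close> show False by (simp add: degree_pderiv)
qed

lemma irreducible_over_coeff_0_nonzero:
  assumes sf: "subfield_C M" and irr: "irreducible_over M f" and "poly f \<alpha> = 0" "\<alpha> \<noteq> 0"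
  shows "coeff f 0 \<noteq> 0"
proof
  assume "coeff f 0 = 0"
  obtain a g where "f = pCons a g" by (cases f)
  with \<open>coeff f 0 = 0\<close> have f: "f = [:0, 1:] * g" by simp
  have "\<forall>i. coeff [:0, 1:] i \<in> M"
    using subfield_C_zero[OF sf] subfield_C_one[OF sf] by (auto simp: coeff_pCons split: nat.split)
  moreover have "\<forall>i. coeff g i \<in> M"
    using irr \<open>f = pCons a g\<close> unfolding irreducible_over_def by (metis coeff_pCons_Suc)
  ultimately have "degree g = 0" using irreducible_overD[OF irr _ _ f] by simp
  then obtain c where "g = [:c:]" by (rule degree_eq_zeroE)
  with f have "f = [:0, c:]" by simp
  then show False using irr \<open>poly f \<alpha> = 0\<close> \<open>\<alpha> \<noteq> 0\<close> unfolding irreducible_over_def by auto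
qed

lemma poly_homogenize:
  fixes p :: "'a::field poly"
  assumes "b \<noteq> 0"
  shows "b ^ degree p * poly p (a / b) = (\<Sum>i\<le>degree p. coeff p i * a ^ i * b ^ (degree p - i))"
  unfolding poly_altdef sum_distrib_left
proof (intro sum.cong refl)
  fix i assume "i \<in> {..degree p}"
  then have "b ^ degree p = b ^ i * b ^ (degree p - i)" by (simp flip: power_add)
  then show "b ^ degree p * (coeff p i * (a / b) ^ i) = coeff p i * a ^ i * b ^ (degree p - i)"
    using assms by (simp add: power_divide field_simps)
qed

lemma monic_complex_poly_factorization:
  fixes g :: "complex poly"
  assumes "lead_coeff g = 1"
  obtains rt where "g = (\<Prod>i<degree g. [:- rt i, 1:])" and "\<And>i. i < degree g \<Longrightarrow> poly g (rt i) = 0"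
proof -
  obtain rt where "Polynomial.smult (lead_coeff g) (\<Prod>i<degree g. [:- rt i, 1:]) = g"
    by (rule complex_poly_decompose')
  then have g: "g = (\<Prod>i<degree g. [:- rt i, 1:])" using assms by simp
  have "poly g (rt i) = 0" if "i < degree g" for i
    using that by (subst g) (auto simp: poly_prod intro: prod_zero)
  with g that show thesis by blast
qed

lemma homogenized_eq_prod_linear_factors:
  fixes g :: "complex poly"
  assumes g: "g = (\<Prod>i<n. [:- rt i, 1:])" and "degree g = n" and "b \<noteq> 0"
  shows "(\<Sum>i\<le>n. coeff g i * a ^ i * b ^ (n - i)) = (\<Prod>i<n. a - rt i * b)"
proof -
  have "(\<Sum>i\<le>n. coeff g i * a ^ i * b ^ (n - i)) = b ^ n * poly g (a / b)"
    using poly_homogenize[OF \<open>b \<noteq> 0\<close>, of g a] \<open>degree g = n\<close> by simp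
  also have "\<dots> = (\<Prod>i<n. b * (a / b - rt i))" by (simp add: g poly_prod prod.distrib)
  also have "\<dots> = (\<Prod>i<n. a - rt i * b)" using \<open>b \<noteq> 0\<close> by (intro prod.cong) (auto simp: field_simps)
  finally show ?thesis .
qed

lemma rel_norm_lin_homogeneous:
  assumes "lead_coeff f = 1" and "rsquarefree f" and "Y \<noteq> 0"
  shows "rel_norm_lin f X Y = (\<Sum>i\<le>degree f. coeff f i * X ^ i * Y ^ (degree f - i))"
proof -
  define R where "R = {z. poly f z = 0}"
  have f: "f = (\<Prod>z\<in>R. [:- z, 1:])"
    using complex_poly_decompose_rsquarefree[OF \<open>rsquarefree f\<close>] assms(1) unfolding R_def by simp
  have "degree f = (\<Sum>z\<in>R. degree [:- z, 1:])"
    by (subst f, rule degree_prod_sum_eq) auto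
  then have card: "card R = degree f" by simp
  have "rel_norm_lin f X Y = (\<Prod>z\<in>R. Y * (X / Y - z))"
    unfolding rel_norm_lin_def R_def[symmetric] using \<open>Y \<noteq> 0\<close>
    by (intro prod.cong) (auto simp: field_simps)
  also have "\<dots> = Y ^ degree f * poly f (X / Y)"
    by (subst (2) f) (simp add: prod.distrib card poly_prod)
  also have "\<dots> = (\<Sum>i\<le>degree f. coeff f i * X ^ i * Y ^ (degree f - i))"
    by (rule poly_homogenize[OF \<open>Y \<noteq> 0\<close>])
  finally show ?thesis .
qed

lemma prod_le_power_imp_ex_le:
  fixes a :: "nat \<Rightarrow> real"
  assumes "0 < n" and "0 \<le> t" and "(\<Prod>i<n. a i) \<le> t ^ n"
  shows "\<exists>i<n. a i \<le> t"
proof (rule ccontr)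
  assume "\<not> (\<exists>i<n. a i \<le> t)"
  then have "\<And>i. i < n \<Longrightarrow> t < a i" by force
  moreover have "\<And>i. i < n \<Longrightarrow> 0 < a i" using calculation assms(2) by (meson le_less_trans)
  ultimately have "(\<Prod>i<n. t) < (\<Prod>i<n. a i)"
    using assms(1,2) by (intro prod_mono_strict[of 0]) (auto intro: less_imp_le)
  with assms(3) show False by simp
qed

context
  fixes M :: "complex set" and \<sigma> :: "complex \<Rightarrow> complex" and f :: "complex poly"
  assumes sf: "subfield_C M" and fe: "field_embedding M \<sigma>" and monic: "lead_coeff f = 1"
begin

lemma field_embedding_map_poly_factorization:
  obtains rt where "map_poly \<sigma> f = (\<Prod>i<degree f. [:- rt i, 1:])"
    and "\<And>i. i < degree f \<Longrightarrow> poly (map_poly \<sigma> f) (rt i) = 0"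
  using monic_complex_poly_factorization[OF field_embedding_lead_coeff_map_poly[OF sf fe monic]]
  unfolding field_embedding_degree_map_poly[OF sf fe monic] by blast

lemma embedded_rel_norm_lin_small_factor:
  assumes fM: "\<forall>i. coeff f i \<in> M" and "rsquarefree f" and "0 < degree f"
    and "X \<in> M" and "Y \<in> M" and "Y \<noteq> 0"
  obtains z where "poly (map_poly \<sigma> f) z = 0"
    and "cmod (\<sigma> X - z * \<sigma> Y) \<le> root (degree f) (cmod (\<sigma> (rel_norm_lin f X Y)))"
proof -
  define n where "n = degree f"
  define g where "g = map_poly \<sigma> f"
  have dg: "degree g = n"
    unfolding g_def n_def by (rule field_embedding_degree_map_poly[OF sf fe monic])
  obtain rt where g: "g = (\<Prod>i<n. [:- rt i, 1:])" and roots: "\<And>i. i < n \<Longrightarrow> poly g (rt i) = 0"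
    using field_embedding_map_poly_factorization unfolding g_def n_def by blast
  have "\<sigma> Y \<noteq> 0" using field_embedding_nonzero[OF sf fe] \<open>Y \<in> M\<close> \<open>Y \<noteq> 0\<close> by blast
  have "\<sigma> (rel_norm_lin f X Y) = \<sigma> (\<Sum>i\<le>n. coeff f i * X ^ i * Y ^ (n - i))"
    unfolding n_def using rel_norm_lin_homogeneous[OF monic \<open>rsquarefree f\<close> \<open>Y \<noteq> 0\<close>] by simp
  also have "\<dots> = (\<Sum>i\<le>n. coeff g i * \<sigma> X ^ i * \<sigma> Y ^ (n - i))"
    using fM \<open>X \<in> M\<close> \<open>Y \<in> M\<close>
    by (simp add: g_def field_embedding_sum[OF sf fe] field_embedding_mult[OF fe]
        field_embedding_power[OF sf fe] field_embedding_coeff_map_poly[OF sf fe]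
        subfield_C_mult[OF sf] subfield_C_power[OF sf])
  also have "\<dots> = (\<Prod>i<n. \<sigma> X - rt i * \<sigma> Y)"
    by (rule homogenized_eq_prod_linear_factors[OF g dg \<open>\<sigma> Y \<noteq> 0\<close>])
  finally have "(\<Prod>i<n. cmod (\<sigma> X - rt i * \<sigma> Y)) \<le> root n (cmod (\<sigma> (rel_norm_lin f X Y))) ^ n"
    using \<open>0 < degree f\<close> by (simp add: n_def prod_norm)
  then obtain i where "i < n" "cmod (\<sigma> X - rt i * \<sigma> Y) \<le> root n (cmod (\<sigma> (rel_norm_lin f X Y)))"
    using prod_le_power_imp_ex_le \<open>0 < degree f\<close> unfolding n_def by (metis real_root_ge_zero norm_ge_zero)
  with roots that show thesis unfolding g_def n_def by blast
qed

lemma embedded_coeff_0_bound: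
  assumes "\<And>z. poly (map_poly \<sigma> f) z = 0 \<Longrightarrow> cmod z \<le> H"
  shows "cmod (\<sigma> (coeff f 0)) \<le> H ^ degree f"
proof -
  define g where "g = map_poly \<sigma> f"
  obtain rt where g: "g = (\<Prod>i<degree f. [:- rt i, 1:])" and roots: "\<And>i. i < degree f \<Longrightarrow> poly g (rt i) = 0"
    using field_embedding_map_poly_factorization unfolding g_def by blast
  have "\<sigma> (coeff f 0) = poly g 0"
    by (simp add: g_def poly_0_coeff_0 field_embedding_coeff_map_poly[OF sf fe])
  also have "\<dots> = (\<Prod>i<degree f. - rt i)" by (simp add: g poly_prod)
  finally have "cmod (\<sigma> (coeff f 0)) = (\<Prod>i<degree f. cmod (rt i))" by (simp flip: prod_norm)
  also have "\<dots> \<le> (\<Prod>i<degree f. H)"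
    using roots assms unfolding g_def by (intro prod_mono) auto
  finally show ?thesis by simp
qed

end

lemma size_alpha_ge:
  assumes sf: "subfield_C M" and fe: "\<forall>j\<in>{1..m}. field_embedding M (\<sigma> j)"
    and monic: "lead_coeff f = 1" and j: "j \<in> {1..m}" and r: "poly (map_poly (\<sigma> j) f) r = 0"
  shows "cmod r \<le> size_alpha m \<sigma> f"
proof -
  have "map_poly (\<sigma> k) f \<noteq> 0" if "k \<in> {1..m}" for k
    using field_embedding_lead_coeff_map_poly[OF sf _ monic, of "\<sigma> k"] fe that by auto
  then have "finite (\<Union>k\<in>{1..m}. {r. poly (map_poly (\<sigma> k) f) r = 0})"
    by (auto intro: poly_roots_finite)
  then have "finite {cmod r | r k. k \<in> {1..m} \<and> poly (map_poly (\<sigma> k) f) r = 0}"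
    by (rule finite_subset[rotated, OF finite_imageI[of _ cmod]]) blast
  then show ?thesis
    unfolding size_alpha_def using j r by (intro Max_ge) auto
qed

section \<open>Nonzero integers of M have size at least 1\<close>

lemma integer_span_closed_times:
  fixes \<beta> :: "'a::comm_ring_1"
  assumes \<beta>_d: "\<beta> ^ d = (\<Sum>l<d. of_int (c l) * \<beta> ^ l)"
  shows "\<exists>a'. \<beta> * (\<Sum>l<d. of_int (a l) * \<beta> ^ l) = (\<Sum>l<d. of_int (a' l) * \<beta> ^ l)"
proof (cases d)
  case (Suc e)
  define a' where "a' l = (case l of 0 \<Rightarrow> 0 | Suc l' \<Rightarrow> a l') + a e * c l" for l
  have shift: "(\<Sum>l<d. of_int (case l of 0 \<Rightarrow> 0 | Suc l' \<Rightarrow> a l') * \<beta> ^ l) = (\<Sum>l<e. of_int (a l) * \<beta> ^ Suc l)"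
    unfolding Suc by (subst sum.lessThan_Suc_shift) simp
  have "\<beta> * (\<Sum>l<d. of_int (a l) * \<beta> ^ l) = (\<Sum>l<e. of_int (a l) * \<beta> ^ Suc l) + of_int (a e) * \<beta> ^ d"
    using Suc by (simp add: sum_distrib_left algebra_simps)
  also have "\<dots> = (\<Sum>l<d. of_int (case l of 0 \<Rightarrow> 0 | Suc l' \<Rightarrow> a l') * \<beta> ^ l)
      + of_int (a e) * (\<Sum>l<d. of_int (c l) * \<beta> ^ l)"
    by (simp only: shift \<beta>_d)
  also have "\<dots> = (\<Sum>l<d. of_int (a' l) * \<beta> ^ l)"
    by (simp add: a'_def sum.distrib sum_distrib_left algebra_simps)
  finally show ?thesis by blast
qed simp

lemma alg_int_powers_span:
  assumes "alg_int \<beta>"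
  obtains d where "\<And>k. \<exists>a :: nat \<Rightarrow> int. \<beta> ^ k = (\<Sum>l<d. of_int (a l) * \<beta> ^ l)"
proof -
  obtain p :: "complex poly" where p: "lead_coeff p = 1" "\<forall>i. coeff p i \<in> \<int>" "poly p \<beta> = 0"
    using assms unfolding alg_int_def by blast
  define d where "d = degree p"
  have "\<forall>l. \<exists>z. coeff p l = of_int z" using p(2) by (metis Ints_cases)
  then obtain c where c: "\<And>l. coeff p l = of_int (c l)" by metis
  have "d \<noteq> 0"
  proof
    assume "d = 0"
    then have "p = 1" using p(1) unfolding d_def by (metis degree_eq_zeroE lead_coeff_pCons(2) one_pCons pCons_0_0)
    with p(3) show False by simp
  qed
  have "0 = (\<Sum>l\<le>d. coeff p l * \<beta> ^ l)" using p(3) unfolding poly_altdef d_def by simp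
  also have "\<dots> = (\<Sum>l<d. of_int (c l) * \<beta> ^ l) + \<beta> ^ d"
    using p(1) unfolding d_def by (simp add: c lessThan_Suc_atMost[symmetric])
  finally have \<beta>_d: "\<beta> ^ d = (\<Sum>l<d. of_int (- c l) * \<beta> ^ l)"
    by (simp add: sum_negf eq_neg_iff_add_eq_0 add.commute)
  have "\<exists>a :: nat \<Rightarrow> int. \<beta> ^ k = (\<Sum>l<d. of_int (a l) * \<beta> ^ l)" for k
  proof (induction k)
    case 0
    have "(\<Sum>l<d. of_int (if l = 0 then 1 else 0) * \<beta> ^ l) = (\<Sum>l<d. if l = 0 then \<beta> ^ l else 0)"
      by (intro sum.cong) auto
    also have "\<dots> = \<beta> ^ 0" using \<open>d \<noteq> 0\<close> by simp
    finally show ?case by (intro exI[of _ "\<lambda>l. if l = 0 then 1 else 0"]) simp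
  next
    case (Suc k)
    then obtain a where "\<beta> ^ k = (\<Sum>l<d. of_int (a l) * \<beta> ^ l)" by blast
    then show ?case using integer_span_closed_times[OF \<beta>_d, of a] by simp
  qed
  with that show thesis by blast
qed

lemma ring_of_integers_powers_common_denominator:
  assumes nf: "number_field M m" and ib: "integral_basis M m \<omega>" and \<beta>: "\<beta> \<in> ring_of_integers M"
  obtains D :: int where "D > 0"
    and "\<And>k. \<exists>q :: nat \<Rightarrow> int. of_int D * \<beta> ^ k = (\<Sum>i=1..m. of_int (q i) * \<omega> i)"
proof -
  have sf: "subfield_C M" using nf by (rule number_field_subfield_C)
  have "\<beta> \<in> M" "alg_int \<beta>" using \<beta> unfolding ring_of_integers_def by auto
  obtain d where pw: "\<And>k. \<exists>a :: nat \<Rightarrow> int. \<beta> ^ k = (\<Sum>l<d. of_int (a l) * \<beta> ^ l)"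
    using alg_int_powers_span[OF \<open>alg_int \<beta>\<close>] by blast
  have "\<exists>r :: nat \<Rightarrow> rat. \<beta> ^ l = (\<Sum>i=1..m. of_rat (r i) * \<omega> i)" for l
    by (rule integral_basis_rat_spans[OF nf ib subfield_C_power[OF sf \<open>\<beta> \<in> M\<close>]]) blast
  then obtain r where r: "\<And>l. \<beta> ^ l = (\<Sum>i=1..m. of_rat (r l i) * \<omega> i)" by metis
  obtain D :: int and z where D: "D > 0"
    and z: "\<And>li. li \<in> {..<d} \<times> {1..m} \<Longrightarrow> of_int D * (case li of (l, i) \<Rightarrow> r l i) = of_int (z li)"
    using common_denominator[of "{..<d} \<times> {1..m}" "\<lambda>(l, i). r l i"] by blast
  have D_\<beta>: "of_int D * \<beta> ^ l = (\<Sum>i=1..m. of_int (z (l, i)) * \<omega> i)" if "l < d" for l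
    unfolding r sum_distrib_left
  proof (intro sum.cong refl)
    fix i assume "i \<in> {1..m}"
    with \<open>l < d\<close> have "of_int D * r l i = of_int (z (l, i))" using z[of "(l, i)"] by simp
    then have "(of_int D * of_rat (r l i) :: complex) = of_int (z (l, i))"
      by (metis of_rat_mult of_rat_of_int_eq)
    then show "of_int D * (of_rat (r l i) * \<omega> i) = of_int (z (l, i)) * \<omega> i" by (simp add: mult.assoc)
  qed
  have "\<exists>q :: nat \<Rightarrow> int. of_int D * \<beta> ^ k = (\<Sum>i=1..m. of_int (q i) * \<omega> i)" for k
  proof -
    obtain a :: "nat \<Rightarrow> int" where a: "\<beta> ^ k = (\<Sum>l<d. of_int (a l) * \<beta> ^ l)" using pw by blast
    have "of_int D * \<beta> ^ k = (\<Sum>l<d. of_int (a l) * (of_int D * \<beta> ^ l))"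
      unfolding a by (simp add: sum_distrib_left mult_ac)
    also have "\<dots> = (\<Sum>l<d. of_int (a l) * (\<Sum>i=1..m. of_int (z (l, i)) * \<omega> i))"
      using D_\<beta> by simp
    also have "\<dots> = (\<Sum>i=1..m. of_int (\<Sum>l<d. a l * z (l, i)) * \<omega> i)"
      by (simp add: sum_distrib_left sum_distrib_right mult.assoc) (rule sum.swap)
    finally show ?thesis by (rule exI[of _ "\<lambda>i. \<Sum>l<d. a l * z (l, i)"])
  qed
  with D that show thesis by blast
qed

lemma ring_of_integers_size_M_ge_1:
  assumes nf: "number_field M m" and emb: "all_embeddings M m \<sigma>" and ib: "integral_basis M m \<omega>"
    and \<beta>: "\<beta> \<in> ring_of_integers M" "\<beta> \<noteq> 0"
  shows "1 \<le> size_M m \<sigma> \<beta>"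
proof (rule ccontr)
  define h where "h = size_M m \<sigma> \<beta>"
  define c where "c = row_norm m (mat_inv_1 m (\<lambda>j i. \<sigma> j (\<omega> i)))"
  assume "\<not> 1 \<le> size_M m \<sigma> \<beta>"
  then have "h < 1" unfolding h_def by simp
  have sf: "subfield_C M" using nf by (rule number_field_subfield_C)
  have "\<beta> \<in> M" using \<beta> unfolding ring_of_integers_def by auto
  have m: "1 \<le> m" using integral_basis_dim_pos[OF nf ib] .
  obtain D :: int where "D > 0"
    and D: "\<And>k. \<exists>q :: nat \<Rightarrow> int. of_int D * \<beta> ^ k = (\<Sum>i=1..m. of_int (q i) * \<omega> i)"
    using ring_of_integers_powers_common_denominator[OF nf ib \<beta>(1)] by blast
  have "0 \<le> c * D" using row_norm_nonneg[OF m] \<open>D > 0\<close> unfolding c_def by simp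
  obtain k where k: "h ^ k < 1 / (c * D + 1)"
    using real_arch_pow_inv[of "1 / (c * D + 1)" h] \<open>h < 1\<close> \<open>0 \<le> c * D\<close> by auto
  \<comment> \<open>the integer coordinates of D \<beta>^k are bounded by c D h^k < 1\<close>
  obtain q where q: "of_int D * \<beta> ^ k = (\<Sum>i=1..m. of_int (q i) * \<omega> i)" using D by blast
  have "size_M m \<sigma> (of_int D * \<beta> ^ k) \<le> D * h ^ k"
  proof (rule size_M_le[OF m])
    fix j assume j: "j \<in> {1..m}"
    have fe: "field_embedding M (\<sigma> j)" using emb j by (rule all_embeddings_field_embedding)
    have "cmod (\<sigma> j (of_int D * \<beta> ^ k)) = D * cmod (\<sigma> j \<beta>) ^ k"
      using \<open>D > 0\<close> \<open>\<beta> \<in> M\<close>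
      by (simp add: field_embedding_mult[OF fe] subfield_C_of_int[OF sf] subfield_C_power[OF sf]
          field_embedding_of_int[OF sf fe] field_embedding_power[OF sf fe] norm_mult norm_power)
    also have "\<dots> \<le> D * h ^ k"
      using \<open>D > 0\<close> size_M_ge[OF j] unfolding h_def by (intro mult_left_mono power_mono) auto
    finally show "cmod (\<sigma> j (of_int D * \<beta> ^ k)) \<le> D * h ^ k" .
  qed
  then have "\<bar>real_of_int (q i)\<bar> < 1" if "i \<in> {1..m}" for i
  proof -
    have "\<bar>real_of_int (q i)\<bar> \<le> c * size_M m \<sigma> (of_int D * \<beta> ^ k)"
      unfolding c_def by (rule integral_coordinate_bound[OF nf emb ib q that])
    also have "\<dots> \<le> c * D * h ^ k"
      using \<open>size_M m \<sigma> (of_int D * \<beta> ^ k) \<le> D * h ^ k\<close> row_norm_nonneg[OF m]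
      unfolding c_def by (simp add: mult_left_mono mult.assoc)
    also have "\<dots> \<le> c * D * (1 / (c * D + 1))"
      using k \<open>0 \<le> c * D\<close> by (intro mult_left_mono) auto
    also have "\<dots> < 1" using \<open>0 \<le> c * D\<close> by (simp add: divide_less_eq)
    finally show ?thesis .
  qed
  then have "q i = 0" if "i \<in> {1..m}" for i
    using that by (metis of_int_abs of_int_less_1_iff zabs_less_one_iff)
  then have "of_int D * \<beta> ^ k = 0" unfolding q by simp
  with \<open>D > 0\<close> \<open>\<beta> \<noteq> 0\<close> show False by simp
qed

section \<open>The coordinate bound\<close>

lemma size_alpha_ge_1:
  assumes nf: "number_field M m" and emb: "all_embeddings M m \<sigma>" and ib: "integral_basis M m \<omega>"
    and monic: "lead_coeff f = 1" and f_coeffs: "\<forall>i. coeff f i \<in> ring_of_integers M"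
    and "coeff f 0 \<noteq> 0" and "0 < degree f"
  shows "1 \<le> size_alpha m \<sigma> f"
proof (rule ccontr)
  define H where "H = size_alpha m \<sigma> f"
  assume "\<not> 1 \<le> size_alpha m \<sigma> f"
  then have "H < 1" unfolding H_def by simp
  have sf: "subfield_C M" using nf by (rule number_field_subfield_C)
  have m: "1 \<le> m" using integral_basis_dim_pos[OF nf ib] .
  have fe: "\<forall>j\<in>{1..m}. field_embedding M (\<sigma> j)" using emb by (auto intro: all_embeddings_field_embedding)
  have roots: "cmod z \<le> H" if "j \<in> {1..m}" "poly (map_poly (\<sigma> j) f) z = 0" for j z
    unfolding H_def by (rule size_alpha_ge[OF sf fe monic that])
  have "field_embedding M (\<sigma> 1)" using fe m by simp
  then obtain rt where "\<And>i. i < degree f \<Longrightarrow> poly (map_poly (\<sigma> 1) f) (rt i) = 0"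
    using field_embedding_map_poly_factorization[OF sf _ monic] by blast
  then have "cmod (rt 0) \<le> H" using roots[of 1 "rt 0"] m \<open>0 < degree f\<close> by simp
  then have "0 \<le> H" using norm_ge_zero order_trans by blast
  have "1 \<le> size_M m \<sigma> (coeff f 0)"
    using ring_of_integers_size_M_ge_1[OF nf emb ib] f_coeffs \<open>coeff f 0 \<noteq> 0\<close> by blast
  also have "\<dots> \<le> H ^ degree f"
    using embedded_coeff_0_bound[OF sf _ monic] fe roots by (intro size_M_le[OF m]) blast
  also have "\<dots> \<le> H ^ 1"
    using \<open>0 \<le> H\<close> \<open>H < 1\<close> \<open>0 < degree f\<close> by (intro power_decreasing) auto
  finally show False using \<open>H < 1\<close> by simp
qed

lemma size_M_bound_from_rel_norm_lin:
  assumes sf: "subfield_C M" and fe: "\<forall>j\<in>{1..m}. field_embedding M (\<sigma> j)" and m: "1 \<le> m"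
    and monic: "lead_coeff f = 1" and fM: "\<forall>i. coeff f i \<in> M" and "rsquarefree f" and "0 < degree f"
    and "X \<in> M" and "Y \<in> M" and pos: "0 < size_alpha m \<sigma> f"
    and big: "root (degree f) (size_M m \<sigma> (rel_norm_lin f X Y)) / size_alpha m \<sigma> f < size_M m \<sigma> Y"
  shows "size_M m \<sigma> X \<le> 2 * size_alpha m \<sigma> f * size_M m \<sigma> Y"
proof -
  let ?N = "rel_norm_lin f X Y" and ?n = "degree f"
  define H where "H = size_alpha m \<sigma> f"
  define hY where "hY = size_M m \<sigma> Y"
  have small: "root ?n (size_M m \<sigma> ?N) < H * hY"
    using big pos unfolding H_def hY_def by (simp add: divide_less_eq mult.commute)
  have "Y \<noteq> 0"
  proof
    assume "Y = 0"
    then have "hY \<le> 0" unfolding hY_def using fe by (intro size_M_le[OF m]) (simp add: field_embedding_zero[OF sf])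
    then have "H * hY \<le> 0" using pos unfolding H_def by (simp add: mult_nonneg_nonpos)
    moreover have "0 \<le> root ?n (size_M m \<sigma> ?N)" by (rule real_root_ge_zero[OF size_M_nonneg[OF m]])
    ultimately show False using small by simp
  qed
  show ?thesis
  proof (rule size_M_le[OF m])
    fix j assume j: "j \<in> {1..m}"
    obtain z where z: "poly (map_poly (\<sigma> j) f) z = 0"
      and close: "cmod (\<sigma> j X - z * \<sigma> j Y) \<le> root ?n (cmod (\<sigma> j ?N))"
      using embedded_rel_norm_lin_small_factor[OF sf _ monic fM \<open>rsquarefree f\<close> \<open>0 < degree f\<close>
          \<open>X \<in> M\<close> \<open>Y \<in> M\<close> \<open>Y \<noteq> 0\<close>] fe j by blast
    have "root ?n (cmod (\<sigma> j ?N)) \<le> root ?n (size_M m \<sigma> ?N)"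
      using size_M_ge[OF j] \<open>0 < degree f\<close> by simp
    with close small have "cmod (\<sigma> j X - z * \<sigma> j Y) \<le> H * hY" by linarith
    moreover have "cmod (z * \<sigma> j Y) \<le> H * hY"
      unfolding norm_mult H_def hY_def using size_alpha_ge[OF sf fe monic j z] size_M_ge[OF j] pos
      by (intro mult_mono) auto
    moreover have "cmod (\<sigma> j X) \<le> cmod (\<sigma> j X - z * \<sigma> j Y) + cmod (z * \<sigma> j Y)"
      using norm_triangle_ineq[of "\<sigma> j X - z * \<sigma> j Y" "z * \<sigma> j Y"] by simp
    ultimately show "cmod (\<sigma> j X) \<le> 2 * size_alpha m \<sigma> f * size_M m \<sigma> Y"
      unfolding H_def hY_def by linarith
  qed
qed

lemma max_Max_abs_le:
  fixes x y :: "nat \<Rightarrow> int"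
  assumes "1 \<le> m" and "\<And>i. i \<in> {1..m} \<Longrightarrow> \<bar>real_of_int (x i)\<bar> \<le> B"
    and "\<And>i. i \<in> {1..m} \<Longrightarrow> \<bar>real_of_int (y i)\<bar> \<le> B"
  shows "real_of_int (max (Max ((\<lambda>i. \<bar>x i\<bar>) ` {1..m})) (Max ((\<lambda>i. \<bar>y i\<bar>) ` {1..m}))) \<le> B"
proof -
  obtain i where i: "i \<in> {1..m}" "Max ((\<lambda>i. \<bar>x i\<bar>) ` {1..m}) = \<bar>x i\<bar>"
    using Max_in[of "(\<lambda>i. \<bar>x i\<bar>) ` {1..m}"] assms(1) by fastforce
  obtain k where k: "k \<in> {1..m}" "Max ((\<lambda>i. \<bar>y i\<bar>) ` {1..m}) = \<bar>y k\<bar>"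
    using Max_in[of "(\<lambda>i. \<bar>y i\<bar>) ` {1..m}"] assms(1) by fastforce
  show ?thesis using i k assms(2)[OF i(1)] assms(3)[OF k(1)] by simp
qed

theorem theorem1:
  fixes M :: "complex set" and m n :: nat and \<omega> :: "nat \<Rightarrow> complex"
    and \<sigma> :: "nat \<Rightarrow> complex \<Rightarrow> complex" and f :: "complex poly"
    and \<alpha> \<mu> X Y :: complex and x y :: "nat \<Rightarrow> int"
  assumes nf: "number_field M m"
    and emb: "all_embeddings M m \<sigma>"
    and ib: "integral_basis M m \<omega>"
    and alpha_int: "alg_int \<alpha>"
    and alpha_nz: "\<alpha> \<noteq> 0"
    and f_monic: "lead_coeff f = 1"
    and f_coeffs: "\<forall>i. coeff f i \<in> ring_of_integers M"
    and f_irr: "irreducible_over M f"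
    and f_root: "poly f \<alpha> = 0"
    and f_deg: "degree f = n"
    and mu: "\<mu> \<in> ring_of_integers M" "\<mu> \<noteq> 0"
    and XY: "X \<in> ring_of_integers M" "Y \<in> ring_of_integers M"
    and eq: "rel_norm_lin f X Y = \<mu>"
    and big: "size_M m \<sigma> Y > root n (size_M m \<sigma> \<mu>) / size_alpha m \<sigma> f"
    and Xrep: "X = (\<Sum>i=1..m. of_int (x i) * \<omega> i)"
    and Yrep: "Y = (\<Sum>i=1..m. of_int (y i) * \<omega> i)"
  shows "real_of_int (max (Max ((\<lambda>i. \<bar>x i\<bar>) ` {1..m})) (Max ((\<lambda>i. \<bar>y i\<bar>) ` {1..m})))
           \<le> (2 * row_norm m (mat_inv_1 m (\<lambda>j i. \<sigma> j (\<omega> i))) * size_alpha m \<sigma> f) * size_M m \<sigma> Y"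
proof -
  let ?c = "row_norm m (mat_inv_1 m (\<lambda>j i. \<sigma> j (\<omega> i)))" and ?H = "size_alpha m \<sigma> f"
  have sf: "subfield_C M" using nf by (rule number_field_subfield_C)
  have m: "1 \<le> m" using integral_basis_dim_pos[OF nf ib] .
  have fe: "\<forall>j\<in>{1..m}. field_embedding M (\<sigma> j)" using emb by (auto intro: all_embeddings_field_embedding)
  have "0 < degree f" using f_irr unfolding irreducible_over_def by simp
  have "\<forall>i. coeff f i \<in> M" "X \<in> M" "Y \<in> M" using f_coeffs XY unfolding ring_of_integers_def by auto
  have H: "1 \<le> ?H"
    using size_alpha_ge_1[OF nf emb ib f_monic f_coeffs _ \<open>0 < degree f\<close>]
      irreducible_over_coeff_0_nonzero[OF sf f_irr f_root alpha_nz] by blast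
  have X: "size_M m \<sigma> X \<le> 2 * ?H * size_M m \<sigma> Y"
    using size_M_bound_from_rel_norm_lin[OF sf fe m f_monic \<open>\<forall>i. coeff f i \<in> M\<close>
        irreducible_over_rsquarefree[OF sf f_irr] \<open>0 < degree f\<close> \<open>X \<in> M\<close> \<open>Y \<in> M\<close>] H big eq f_deg
    by simp
  have "0 \<le> ?c" by (rule row_norm_nonneg[OF m])
  have "\<bar>real_of_int (x i)\<bar> \<le> 2 * ?c * ?H * size_M m \<sigma> Y" if "i \<in> {1..m}" for i
  proof -
    have "\<bar>real_of_int (x i)\<bar> \<le> ?c * size_M m \<sigma> X"
      by (rule integral_coordinate_bound[OF nf emb ib Xrep that])
    also have "\<dots> \<le> ?c * (2 * ?H * size_M m \<sigma> Y)" by (rule mult_left_mono[OF X \<open>0 \<le> ?c\<close>])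
    finally show ?thesis by (simp add: mult_ac)
  qed
  moreover have "\<bar>real_of_int (y i)\<bar> \<le> 2 * ?c * ?H * size_M m \<sigma> Y" if "i \<in> {1..m}" for i
  proof -
    have "\<bar>real_of_int (y i)\<bar> \<le> ?c * size_M m \<sigma> Y"
      by (rule integral_coordinate_bound[OF nf emb ib Yrep that])
    also have "\<dots> \<le> 2 * ?H * (?c * size_M m \<sigma> Y)"
      using mult_right_mono[of 1 "2 * ?H" "?c * size_M m \<sigma> Y"] H \<open>0 \<le> ?c\<close> size_M_nonneg[OF m]
      by simp
    finally show ?thesis by (simp add: mult_ac)
  qed
  ultimately show ?thesis by (intro max_Max_abs_le[OF m]) auto
qed

end
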